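(* Consider fair division instances with $n$ agents, $m$ divisible goods, additive valuations and generalized assignment constraints (constraints publicly known, valuations reported). Consider the mechanism: set $\mathcal{P}=\emptyset$; for $i=1,\dots,n$, let $q_i$ be the optimal value of the linear program in variables $\{x_{j,g}\}_{j\le i,g\in[m]}$ maximizing $v_i(x_i)$ subject to $x_{j,g}\ge0$, $\sum_{j\le i}x_{j,g}\le1$ for all $g$, $x_j$ feasible for $j$ for all $j\le i$, and all constraints in $\mathcal{P}$; then add the constraint $v_i(x_i)=q_i$ to $\mathcal{P}$. Finally output any $x=(x_1,\dots,x_n)$ with $x_{j,g}\ge0$, $\sum_{j}x_{j,g}\le1$, $x_j$ feasible for $j$ for all $j$, and satisfying all constraints in $\mathcal{P}$. This mechanism is truthful and always outputs a Pareto-optimal allocation.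
   Context: Additive valuations: $v_i(y)=\sum_g y_g v_{i,g}$, $v_{i,g}\ge0$, where $v_i$ is agent $i$'s reported valuation. Generalized assignment constraints: agent $i$ has sizes $s_i(g)\ge0$ and budget $B_i$; bundle $y$ is feasible for $i$ iff $\sum_g s_i(g)y_g\le B_i$. A feasible allocation $x$ is Pareto-optimal if no feasible allocation $z$ has $v_i(z_i)\ge v_i(x_i)$ for all $i$ with some inequality strict. A mechanism maps reported valuation profiles to feasible allocations; it is truthful if no agent can obtain a bundle of strictly higher true value by misreporting her valuation, for any reports of the other agents. *)

theory Defs
  imports Main "HOL-Analysis.Analysis"
begin

text \<open>Agents are 0,...,n-1, goods are 0,...,m-1.
  A valuation profile is v :: nat => nat => real (v i g = v_{i,g}),
  sizes s i g = s_i(g), budgets B i = B_i.\<close>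

definition bundle_val :: "nat \<Rightarrow> (nat \<Rightarrow> nat \<Rightarrow> real) \<Rightarrow> nat \<Rightarrow> (nat \<Rightarrow> real) \<Rightarrow> real" where
  "bundle_val m v i y = (\<Sum>g<m. y g * v i g)"

definition feasible_bundle :: "nat \<Rightarrow> (nat \<Rightarrow> nat \<Rightarrow> real) \<Rightarrow> (nat \<Rightarrow> real) \<Rightarrow> nat \<Rightarrow> (nat \<Rightarrow> real) \<Rightarrow> bool" where
  "feasible_bundle m s B i y \<longleftrightarrow> (\<Sum>g<m. s i g * y g) \<le> B i"

definition stage_region :: "nat \<Rightarrow> (nat \<Rightarrow> nat \<Rightarrow> real) \<Rightarrow> (nat \<Rightarrow> real) \<Rightarrow> nat \<Rightarrow> (nat \<Rightarrow> nat \<Rightarrow> real) \<Rightarrow> bool" where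
  "stage_region m s B i x \<longleftrightarrow>
     (\<forall>j\<le>i. \<forall>g<m. 0 \<le> x j g) \<and>
     (\<forall>g<m. (\<Sum>j\<le>i. x j g) \<le> 1) \<and>
     (\<forall>j\<le>i. feasible_bundle m s B j (x j))"

definition feasible_alloc :: "nat \<Rightarrow> nat \<Rightarrow> (nat \<Rightarrow> nat \<Rightarrow> real) \<Rightarrow> (nat \<Rightarrow> real) \<Rightarrow> (nat \<Rightarrow> nat \<Rightarrow> real) \<Rightarrow> bool" where
  "feasible_alloc n m s B x \<longleftrightarrow>
     (\<forall>j g. (n \<le> j \<or> m \<le> g) \<longrightarrow> x j g = 0) \<and>
     (\<forall>j<n. \<forall>g<m. 0 \<le> x j g) \<and>
     (\<forall>g<m. (\<Sum>j<n. x j g) \<le> 1) \<and>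
     (\<forall>j<n. feasible_bundle m s B j (x j))"

text \<open>opt_vals m s B v i = [q_0, ..., q_{i-1}]: the optimal LP values of the first i
  stages of the mechanism (the constraint set P after i stages).\<close>
primrec opt_vals :: "nat \<Rightarrow> (nat \<Rightarrow> nat \<Rightarrow> real) \<Rightarrow> (nat \<Rightarrow> real) \<Rightarrow> (nat \<Rightarrow> nat \<Rightarrow> real) \<Rightarrow> nat \<Rightarrow> real list" where
  "opt_vals m s B v 0 = []"
| "opt_vals m s B v (Suc i) =
     (let P = opt_vals m s B v i in
      P @ [Sup {bundle_val m v i (x i) | x. stage_region m s B i x \<and>
                  (\<forall>j<i. bundle_val m v j (x j) = P ! j)}])"

definition mech_outputs :: "nat \<Rightarrow> nat \<Rightarrow> (nat \<Rightarrow> nat \<Rightarrow> real) \<Rightarrow> (nat \<Rightarrow> real) \<Rightarrow> (nat \<Rightarrow> nat \<Rightarrow> real) \<Rightarrow> (nat \<Rightarrow> nat \<Rightarrow> real) set" where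
  "mech_outputs n m s B v =
     {x. feasible_alloc n m s B x \<and> (\<forall>j<n. bundle_val m v j (x j) = opt_vals m s B v n ! j)}"

definition valid_valuations :: "nat \<Rightarrow> nat \<Rightarrow> (nat \<Rightarrow> nat \<Rightarrow> real) \<Rightarrow> bool" where
  "valid_valuations n m v \<longleftrightarrow> (\<forall>i<n. \<forall>g<m. 0 \<le> v i g)"

definition pareto_optimal :: "nat \<Rightarrow> nat \<Rightarrow> (nat \<Rightarrow> nat \<Rightarrow> real) \<Rightarrow> (nat \<Rightarrow> real) \<Rightarrow> (nat \<Rightarrow> nat \<Rightarrow> real) \<Rightarrow> (nat \<Rightarrow> nat \<Rightarrow> real) \<Rightarrow> bool" where
  "pareto_optimal n m s B v x \<longleftrightarrow> feasible_alloc n m s B x \<and>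
     \<not> (\<exists>z. feasible_alloc n m s B z \<and>
            (\<forall>i<n. bundle_val m v i (x i) \<le> bundle_val m v i (z i)) \<and>
            (\<exists>i<n. bundle_val m v i (x i) < bundle_val m v i (z i)))"

definition truthful :: "nat \<Rightarrow> nat \<Rightarrow> ((nat \<Rightarrow> nat \<Rightarrow> real) \<Rightarrow> (nat \<Rightarrow> nat \<Rightarrow> real) set) \<Rightarrow> bool" where
  "truthful n m M \<longleftrightarrow>
     (\<forall>v v' i x y. valid_valuations n m v \<and> valid_valuations n m v' \<and> i < n \<and>
        (\<forall>j<n. j \<noteq> i \<longrightarrow> (\<forall>g<m. v' j g = v j g)) \<and>
        x \<in> M v \<and> y \<in> M v' \<longrightarrow>
        \<not> (bundle_val m v i (x i) < bundle_val m v i (y i)))"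

end

theory Submission
  imports Defs
begin

text \<open>The output of the mechanism is lexicographically maximal among feasible allocations:
  an allocation that gives each agent \<open>j < i\<close> the value \<open>q\<^sub>j\<close> satisfies the constraints
  of the \<open>i\<close>-th linear program, so it gives agent \<open>i\<close> at most \<open>q\<^sub>i\<close>.
  Pareto-optimality follows by looking at the first agent who would strictly gain.
  Truthfulness follows because \<open>q\<^sub>0, \<dots>, q\<^sub>i\<^sub>-\<^sub>1\<close> do not depend on the report of agent \<open>i\<close>,
  so every outcome agent \<open>i\<close> can reach by misreporting is feasible for her truthful
  \<open>i\<close>-th program. The programs are solvable because their feasible regions are compact
  and, given \<open>B\<^sub>i \<ge> 0\<close>, nonempty.\<close>

lemma compact_PiE_UNIV:
  fixes C :: "'a \<Rightarrow> 'b::topological_space set"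
  assumes "\<And>i. compact (C i)"
  shows "compact (PiE UNIV C)"
proof -
  have "compactin (product_topology (\<lambda>i. euclidean) UNIV) (PiE UNIV C)"
    using assms by (simp add: compactin_PiE)
  then show ?thesis
    by (simp add: euclidean_product_topology)
qed

lemma continuous_on_apply2 [continuous_intros]:
  "continuous_on S (\<lambda>x::'a \<Rightarrow> 'b \<Rightarrow> 'c::topological_space. x j g)"
proof -
  have "continuous_on S (\<lambda>x::'a \<Rightarrow> 'b \<Rightarrow> 'c. x j)"
    by (rule continuous_on_product_then_coordinatewise) (rule continuous_on_id)
  then show ?thesis
    by (rule continuous_on_product_then_coordinatewise)
qed

lemma exists_first_strict_less:
  fixes a b :: "nat \<Rightarrow> 'a::linorder"
  assumes "\<forall>i<n. a i \<le> b i" and "\<exists>i<n. a i < b i"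
  obtains k where "k < n" "a k < b k" "\<forall>j<k. b j = a j"
proof -
  define k where "k = (LEAST i. i < n \<and> a i < b i)"
  have "k < n" "a k < b k"
    using LeastI_ex[OF assms(2)] by (auto simp: k_def)
  moreover have "b j = a j" if "j < k" for j
  proof -
    have "\<not> a j < b j"
      using not_less_Least[of j "\<lambda>i. i < n \<and> a i < b i"] that \<open>k < n\<close>
      by (auto simp: k_def)
    then show ?thesis
      using assms(1) that \<open>k < n\<close> by (meson order.antisym not_less less_trans)
  qed
  ultimately show thesis using that by blast
qed

definition alloc_box :: "nat \<Rightarrow> nat \<Rightarrow> (nat \<Rightarrow> nat \<Rightarrow> real) set" where
  "alloc_box n m = PiE UNIV (\<lambda>j. PiE UNIV (\<lambda>g. if j < n \<and> g < m then {0..1} else {0}))"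

lemma compact_alloc_box: "compact (alloc_box n m)"
  unfolding alloc_box_def by (intro compact_PiE_UNIV) auto

lemma feasible_alloc_le_one:
  assumes "feasible_alloc n m s B x" "j < n" "g < m"
  shows "x j g \<le> 1"
proof -
  have "x j g \<le> (\<Sum>j<n. x j g)"
    using assms by (intro member_le_sum) (auto simp: feasible_alloc_def)
  also have "\<dots> \<le> 1"
    using assms by (auto simp: feasible_alloc_def)
  finally show ?thesis .
qed

lemma feasible_alloc_in_alloc_box:
  "feasible_alloc n m s B x \<Longrightarrow> x \<in> alloc_box n m"
  using feasible_alloc_le_one[of n m s B x]
  by (auto simp: alloc_box_def feasible_alloc_def PiE_iff not_less)

lemma closed_feasible_alloc: "closed {x. feasible_alloc n m s B x}"
  unfolding feasible_alloc_def feasible_bundle_def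
  by (intro closed_Collect_conj closed_Collect_all closed_Collect_imp closed_Collect_le
      closed_Collect_eq continuous_intros) auto

lemma compact_feasible_alloc: "compact {x. feasible_alloc n m s B x}"
proof -
  have "{x. feasible_alloc n m s B x} = alloc_box n m \<inter> {x. feasible_alloc n m s B x}"
    using feasible_alloc_in_alloc_box by blast
  then show ?thesis
    using compact_alloc_box closed_feasible_alloc by (metis compact_Int_closed)
qed

lemma feasible_alloc_Suc:
  assumes "feasible_alloc n m s B x" "0 \<le> B n"
  shows "feasible_alloc (Suc n) m s B x"
proof -
  have "x n = (\<lambda>_. 0)"
    using assms(1) by (auto simp: feasible_alloc_def)
  then show ?thesis
    using assms by (auto simp: feasible_alloc_def feasible_bundle_def less_Suc_eq)
qed

lemma stage_region_if_feasible_alloc: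
  assumes "feasible_alloc n m s B x" "i < n"
  shows "stage_region m s B i x"
proof -
  have "(\<Sum>j\<le>i. x j g) \<le> (\<Sum>j<n. x j g)" if "g < m" for g
    using assms that by (intro sum_mono2) (auto simp: feasible_alloc_def)
  then show ?thesis
    using assms by (fastforce simp: feasible_alloc_def stage_region_def)
qed

definition stage_values ::
    "nat \<Rightarrow> (nat \<Rightarrow> nat \<Rightarrow> real) \<Rightarrow> (nat \<Rightarrow> real) \<Rightarrow> (nat \<Rightarrow> nat \<Rightarrow> real) \<Rightarrow> nat \<Rightarrow> real set" where
  "stage_values m s B v i = {bundle_val m v i (x i) | x. stage_region m s B i x \<and>
     (\<forall>j<i. bundle_val m v j (x j) = opt_vals m s B v i ! j)}"

definition stage_allocs ::
    "nat \<Rightarrow> (nat \<Rightarrow> nat \<Rightarrow> real) \<Rightarrow> (nat \<Rightarrow> real) \<Rightarrow> (nat \<Rightarrow> nat \<Rightarrow> real) \<Rightarrow> nat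
      \<Rightarrow> (nat \<Rightarrow> nat \<Rightarrow> real) set" where
  "stage_allocs m s B v i = {x. feasible_alloc (Suc i) m s B x \<and>
     (\<forall>j<i. bundle_val m v j (x j) = opt_vals m s B v i ! j)}"

lemma length_opt_vals [simp]: "length (opt_vals m s B v k) = k"
  by (induction k) (auto simp: Let_def)

lemma opt_vals_Suc_nth: "opt_vals m s B v (Suc k) ! k = Sup (stage_values m s B v k)"
  by (simp add: Let_def nth_append stage_values_def)

lemma nth_opt_vals: "j < k \<Longrightarrow> opt_vals m s B v k ! j = Sup (stage_values m s B v j)"
proof (induction k)
  case (Suc k)
  then show ?case
    by (cases "j = k") (simp_all add: opt_vals_Suc_nth del: opt_vals.simps, simp add: Let_def nth_append)
qed simp

lemma opt_vals_cong:
  "\<forall>j<k. \<forall>g<m. v' j g = v j g \<Longrightarrow> opt_vals m s B v' k = opt_vals m s B v k"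
proof (induction k)
  case (Suc k)
  have "bundle_val m v' j = bundle_val m v j" if "j < Suc k" for j
    using Suc.prems that by (auto simp: bundle_val_def fun_eq_iff)
  with Suc show ?case by (simp add: Let_def)
qed simp

lemma nth_opt_vals_eq:
  "j < i \<Longrightarrow> j < k \<Longrightarrow> opt_vals m s B v k ! j = opt_vals m s B v i ! j"
  by (simp add: nth_opt_vals)

lemma nth_opt_vals_cong:
  assumes "j < k" "\<forall>l\<le>j. \<forall>g<m. v' l g = v l g"
  shows "opt_vals m s B v' k ! j = opt_vals m s B v k ! j"
proof -
  have "opt_vals m s B v' k ! j = opt_vals m s B v' (Suc j) ! j"
    using assms(1) by (intro nth_opt_vals_eq) auto
  also have "opt_vals m s B v' (Suc j) = opt_vals m s B v (Suc j)"
    using assms(2) by (intro opt_vals_cong) (auto simp: less_Suc_eq_le)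
  also have "\<dots> ! j = opt_vals m s B v k ! j"
    using assms(1) by (intro nth_opt_vals_eq) auto
  finally show ?thesis .
qed

text \<open>Padding with zeros outside the agents \<open>\<le> i\<close> and the goods \<open>< m\<close> replaces the
  unbounded region \<^const>\<open>stage_region\<close> by the compact set \<^const>\<open>stage_allocs\<close>.\<close>

lemma stage_values_eq_image:
  "stage_values m s B v i = (\<lambda>x. bundle_val m v i (x i)) ` stage_allocs m s B v i"
proof (intro equalityI subsetI)
  fix a assume "a \<in> stage_values m s B v i"
  then obtain x where x: "stage_region m s B i x"
      "\<forall>j<i. bundle_val m v j (x j) = opt_vals m s B v i ! j"
    and a: "a = bundle_val m v i (x i)"
    by (auto simp: stage_values_def)
  define x' where "x' = (\<lambda>j g. if j \<le> i \<and> g < m then x j g else 0)"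
  have same_val: "bundle_val m v j (x' j) = bundle_val m v j (x j)" if "j \<le> i" for j
    using that by (auto simp: bundle_val_def x'_def intro!: sum.cong)
  have "feasible_bundle m s B j (x' j) = feasible_bundle m s B j (x j)" if "j \<le> i" for j
    using that by (auto simp: feasible_bundle_def x'_def intro!: arg_cong2[where f="(\<le>)"] sum.cong)
  moreover have "(\<Sum>j<Suc i. x' j g) = (\<Sum>j\<le>i. x j g)" if "g < m" for g
    using that by (auto simp: x'_def lessThan_Suc_atMost intro!: sum.cong)
  ultimately have "x' \<in> stage_allocs m s B v i"
    using x same_val
    by (auto simp: stage_allocs_def feasible_alloc_def stage_region_def x'_def less_Suc_eq_le)
  then show "a \<in> (\<lambda>x. bundle_val m v i (x i)) ` stage_allocs m s B v i"
    using a same_val[of i] by (intro image_eqI[where x = x']) auto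
next
  fix a assume "a \<in> (\<lambda>x. bundle_val m v i (x i)) ` stage_allocs m s B v i"
  then show "a \<in> stage_values m s B v i"
    by (auto simp: stage_allocs_def stage_values_def intro: stage_region_if_feasible_alloc)
qed

lemma compact_stage_allocs: "compact (stage_allocs m s B v i)"
proof -
  have "stage_allocs m s B v i = {x. feasible_alloc (Suc i) m s B x} \<inter>
      {x. \<forall>j<i. bundle_val m v j (x j) = opt_vals m s B v i ! j}"
    by (auto simp: stage_allocs_def)
  also have "compact \<dots>"
    unfolding bundle_val_def
    by (intro compact_Int_closed compact_feasible_alloc closed_Collect_all closed_Collect_imp
        closed_Collect_eq continuous_intros) auto
  finally show ?thesis .
qed

lemma continuous_on_bundle_val_agent [continuous_intros]:
  "continuous_on S (\<lambda>x. bundle_val m v i (x i))"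
  unfolding bundle_val_def by (intro continuous_intros)

lemma bdd_above_stage_values: "bdd_above (stage_values m s B v i)"
  unfolding stage_values_eq_image
  by (intro bounded_imp_bdd_above compact_imp_bounded compact_continuous_image
      compact_stage_allocs continuous_intros)

lemma bundle_val_le_opt_vals:
  assumes "feasible_alloc n m s B z" "i < n"
    and "\<forall>j<i. bundle_val m v j (z j) = opt_vals m s B v n ! j"
  shows "bundle_val m v i (z i) \<le> opt_vals m s B v n ! i"
proof -
  have "\<forall>j<i. bundle_val m v j (z j) = opt_vals m s B v i ! j"
    using assms(2,3) nth_opt_vals_eq[of _ i n] by simp
  then have "bundle_val m v i (z i) \<in> stage_values m s B v i"
    using assms(1,2) by (auto simp: stage_values_def intro: stage_region_if_feasible_alloc)
  then show ?thesis
    using assms(2) nth_opt_vals bdd_above_stage_values by (metis cSup_upper)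
qed

lemma opt_vals_attained:
  assumes "\<forall>j<k. 0 \<le> B j"
  shows "\<exists>x. feasible_alloc k m s B x \<and> (\<forall>j<k. bundle_val m v j (x j) = opt_vals m s B v k ! j)"
  using assms
proof (induction k)
  case 0
  have "feasible_alloc 0 m s B (\<lambda>_ _. 0)"
    by (simp add: feasible_alloc_def)
  then show ?case by blast
next
  case (Suc k)
  let ?val = "\<lambda>x. bundle_val m v k (x k)"
  from Suc obtain x where "x \<in> stage_allocs m s B v k"
    by (auto simp: stage_allocs_def intro: feasible_alloc_Suc)
  then obtain y where y: "y \<in> stage_allocs m s B v k"
    and y_max: "\<And>z. z \<in> stage_allocs m s B v k \<Longrightarrow> ?val z \<le> ?val y"
    using continuous_attains_sup[OF compact_stage_allocs, of m s B v k ?val]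
    by (auto intro: continuous_intros)
  have "opt_vals m s B v (Suc k) ! k = Sup (stage_values m s B v k)"
    by (rule opt_vals_Suc_nth)
  also have "\<dots> = Sup (?val ` stage_allocs m s B v k)"
    by (simp only: stage_values_eq_image)
  also have "\<dots> = ?val y"
    using y y_max by (intro cSup_eq_maximum) auto
  finally have "\<forall>j<Suc k. bundle_val m v j (y j) = opt_vals m s B v (Suc k) ! j"
    using y nth_opt_vals_eq[of _ k "Suc k"]
    by (auto simp: stage_allocs_def less_Suc_eq)
  with y show ?case
    by (auto simp: stage_allocs_def)
qed

lemma mech_outputs_nonempty:
  "\<forall>i<n. 0 \<le> B i \<Longrightarrow> mech_outputs n m s B v \<noteq> {}"
  unfolding mech_outputs_def using opt_vals_attained[of n B m s v] by blast

lemma mech_outputs_pareto_optimal: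
  assumes x: "x \<in> mech_outputs n m s B v"
  shows "pareto_optimal n m s B v x"
proof -
  have False if z: "feasible_alloc n m s B z"
      "\<forall>i<n. bundle_val m v i (x i) \<le> bundle_val m v i (z i)"
      "\<exists>i<n. bundle_val m v i (x i) < bundle_val m v i (z i)" for z
  proof -
    obtain k where k: "k < n" "bundle_val m v k (x k) < bundle_val m v k (z k)"
      and equal_before: "\<forall>j<k. bundle_val m v j (z j) = bundle_val m v j (x j)"
      using exists_first_strict_less[OF z(2,3)] by blast
    have "bundle_val m v k (z k) \<le> opt_vals m s B v n ! k"
      using x z(1) k(1) equal_before by (intro bundle_val_le_opt_vals) (auto simp: mech_outputs_def)
    also have "\<dots> = bundle_val m v k (x k)"
      using x k(1) by (auto simp: mech_outputs_def)
    finally show False using k(2) by simp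
  qed
  with x show ?thesis
    unfolding pareto_optimal_def mech_outputs_def by blast
qed

lemma truthful_mech_outputs: "truthful n m (mech_outputs n m s B)"
  unfolding truthful_def
proof (intro allI impI notI)
  fix v v' i x y
  assume "valid_valuations n m v \<and> valid_valuations n m v' \<and> i < n \<and>
      (\<forall>j<n. j \<noteq> i \<longrightarrow> (\<forall>g<m. v' j g = v j g)) \<and>
      x \<in> mech_outputs n m s B v \<and> y \<in> mech_outputs n m s B v'"
  then have i: "i < n" and others: "\<forall>j<n. j \<noteq> i \<longrightarrow> (\<forall>g<m. v' j g = v j g)"
    and x: "x \<in> mech_outputs n m s B v" and y: "y \<in> mech_outputs n m s B v'"
    by auto
  assume gain: "bundle_val m v i (x i) < bundle_val m v i (y i)"
  have "bundle_val m v j (y j) = opt_vals m s B v n ! j" if "j < i" for j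
  proof -
    have "bundle_val m v j (y j) = bundle_val m v' j (y j)"
      using that i others by (auto simp: bundle_val_def intro!: sum.cong)
    also have "\<dots> = opt_vals m s B v' n ! j"
      using y that i by (auto simp: mech_outputs_def)
    also have "\<dots> = opt_vals m s B v n ! j"
      using that i others by (intro nth_opt_vals_cong) auto
    finally show ?thesis .
  qed
  then have "bundle_val m v i (y i) \<le> opt_vals m s B v n ! i"
    using y i by (intro bundle_val_le_opt_vals) (auto simp: mech_outputs_def)
  also have "\<dots> = bundle_val m v i (x i)"
    using x i by (auto simp: mech_outputs_def)
  finally show False using gain by simp
qed

theorem theorem6:
  fixes n m :: nat and s :: "nat \<Rightarrow> nat \<Rightarrow> real" and B :: "nat \<Rightarrow> real"
  assumes sizes_nonneg: "\<forall>i<n. \<forall>g<m. 0 \<le> s i g"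
    and budgets_nonneg: "\<forall>i<n. 0 \<le> B i"
  shows "truthful n m (mech_outputs n m s B)
    \<and> (\<forall>v. valid_valuations n m v \<longrightarrow>
           mech_outputs n m s B v \<noteq> {} \<and>
           (\<forall>x \<in> mech_outputs n m s B v. pareto_optimal n m s B v x))"
  by (intro conjI allI impI ballI truthful_mech_outputs mech_outputs_nonempty[OF budgets_nonneg]
      mech_outputs_pareto_optimal)

end
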